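(* Let $(i,k)\in\mathcal I_1$. Then $F_{st}F_{\ge(i,k)}=0$ for every $(s,t)\in\mathcal I_1$ with $(s,t)\succeq(i,k)$; equivalently, $F_{st}F_{>(i,k)}=0$ for every $(s,t)\in\mathcal I_1$ with $(s,t)\succ(i,k)$.
   Context: Let $m,n\ge 1$, let $q$ be an indeterminate, and let indices range over $[1,m+n]$. Put $q_i=q$ if $i\le m$ and $q_i=q^{-1}$ if $i>m$. Let $\mathcal I_0=\{(i,j):1\le i<j\le m \text{ or } m+1\le i<j\le m+n\}$, $\mathcal I_1=\{(i,j):1\le i\le m<j\le m+n\}$. The quantum supergroup $U_q=U_q(\mathfrak{gl}(m|n))$ is the associative $\mathbb C(q)$-superalgebra generated by $K_j^{\pm1}$ ($j\in[1,m+n]$) and $E_{i,i+1},F_{i,i+1}$ ($1\le i<m+n$), where $K_j^{\pm1}$ and $E_{i,i+1},F_{i,i+1}$ for $i\ne m$ are even and $E_{m,m+1},F_{m,m+1}$ are odd, subject to: $K_iK_j=K_jK_i$, $K_iK_i^{-1}=1$; $K_iE_{j,j+1}K_i^{-1}=q_i^{\delta_{ij}-\delta_{i,j+1}}E_{j,j+1}$, $K_iF_{j,j+1}K_i^{-1}=q_i^{-(\delta_{ij}-\delta_{i,j+1})}F_{j,j+1}$; $[E_{i,i+1},F_{j,j+1}]=\delta_{ij}\frac{K_iK_{i+1}^{-1}-K_i^{-1}K_{i+1}}{q_i-q_i^{-1}}$; $E_{m,m+1}^2=F_{m,m+1}^2=0$; $E_{i,i+1}E_{j,j+1}=E_{j,j+1}E_{i,i+1}$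 and $F_{i,i+1}F_{j,j+1}=F_{j,j+1}F_{i,i+1}$ for $|i-j|>1$; for $|i-j|=1$, $i\neq m$, and $X\in\{E,F\}$: $X_{i,i+1}^2X_{j,j+1}-(q+q^{-1})X_{i,i+1}X_{j,j+1}X_{i,i+1}+X_{j,j+1}X_{i,i+1}^2=0$; and $[E_{m-1,m+2},E_{m,m+1}]=[F_{m-1,m+2},F_{m,m+1}]=0$. Here for homogeneous $x,y$, $[x,y]=xy-(-1)^{\bar x\bar y}yx$. For $i<j$ with $j>i+1$, $E_{ij}=E_{ic}E_{cj}-q_c^{-1}E_{cj}E_{ic}$ and $F_{ij}=-q_cF_{ic}F_{cj}+F_{cj}F_{ic}$ for $i<c<j$ (independent of $c$); $E_{ij},F_{ij}$ are odd iff $(i,j)\in\mathcal I_1$. Order on $\mathcal I_1$: $(i,j)\prec(s,t)$ iff $j>t$, or $j=t$ and $i<s$. For $I\subseteq\mathcal I_1$, $F_I$ is the product of the $F_{ij}$, $(i,j)\in I$, taken in increasing $\prec$-order ($F_\emptyset=1$). For $(i,j)\in\mathcal I_1$, $F_{\ge(i,j)}$, $F_{>(i,j)}$, $F_{\le(i,j)}$, $F_{<(i,j)}$ denote $F_I$ for $I=\{(s,t)\in\mathcal I_1:(s,t)\succeq(i,j)\}$, $\{(s,t):(s,t)\succ(i,j)\}$, $\{(s,t):(s,t)\preceq(i,j)\}$, $\{(s,t):(s,t)\prec(i,j)\}$ respectively. *)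

theory Defs
  imports Complex_Main "HOL-Computational_Algebra.Polynomial" "HOL-Computational_Algebra.Fraction_Field"
begin

text \<open>The base field C(q): fractions of complex polynomials; q is the indeterminate.\<close>
type_synonym cq = "complex poly fract"

definition qf :: cq where "qf = Fract [:0, 1:] 1"

definition qidx :: "nat \<Rightarrow> nat \<Rightarrow> cq" where
  "qidx m i = (if i \<le> m then qf else inverse qf)"

text \<open>q_i ^ (delta_{ij} - delta_{i,j+1}).\<close>
definition kexp :: "nat \<Rightarrow> nat \<Rightarrow> nat \<Rightarrow> cq" where
  "kexp m i j = (if i = j then qidx m i else if i = Suc j then inverse (qidx m i) else 1)"

text \<open>An associative unital C(q)-algebra structure on a ring: a unital ring
  homomorphism from C(q) into the centre.\<close>
definition central_hom :: "(cq \<Rightarrow> 'a::ring_1) \<Rightarrow> bool" where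
  "central_hom \<phi> \<longleftrightarrow> \<phi> 1 = 1 \<and> (\<forall>a b. \<phi> (a + b) = \<phi> a + \<phi> b)
     \<and> (\<forall>a b. \<phi> (a * b) = \<phi> a * \<phi> b) \<and> (\<forall>c x. \<phi> c * x = x * \<phi> c)"

text \<open>Root vectors: Ed \<phi> m E i d = E_{i,i+d+1}, built with c = i+1.
  E i stands for E_{i,i+1}.\<close>
primrec Ed :: "(cq \<Rightarrow> 'a::ring_1) \<Rightarrow> nat \<Rightarrow> (nat \<Rightarrow> 'a) \<Rightarrow> nat \<Rightarrow> nat \<Rightarrow> 'a" where
  "Ed \<phi> m E i 0 = E i"
| "Ed \<phi> m E i (Suc d) = E i * Ed \<phi> m E (Suc i) d
      - \<phi> (inverse (qidx m (Suc i))) * Ed \<phi> m E (Suc i) d * E i"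

primrec Fd :: "(cq \<Rightarrow> 'a::ring_1) \<Rightarrow> nat \<Rightarrow> (nat \<Rightarrow> 'a) \<Rightarrow> nat \<Rightarrow> nat \<Rightarrow> 'a" where
  "Fd \<phi> m F i 0 = F i"
| "Fd \<phi> m F i (Suc d) = - (\<phi> (qidx m (Suc i)) * F i * Fd \<phi> m F (Suc i) d)
      + Fd \<phi> m F (Suc i) d * F i"

definition Eij :: "(cq \<Rightarrow> 'a::ring_1) \<Rightarrow> nat \<Rightarrow> (nat \<Rightarrow> 'a) \<Rightarrow> nat \<Rightarrow> nat \<Rightarrow> 'a" where
  "Eij \<phi> m E i j = Ed \<phi> m E i (j - i - 1)"

definition Fij :: "(cq \<Rightarrow> 'a::ring_1) \<Rightarrow> nat \<Rightarrow> (nat \<Rightarrow> 'a) \<Rightarrow> nat \<Rightarrow> nat \<Rightarrow> 'a" where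
  "Fij \<phi> m F i j = Fd \<phi> m F i (j - i - 1)"

definition serre :: "(cq \<Rightarrow> 'a::ring_1) \<Rightarrow> (nat \<Rightarrow> 'a) \<Rightarrow> nat \<Rightarrow> nat \<Rightarrow> 'a" where
  "serre \<phi> X i j = X i * X i * X j - \<phi> (qf + inverse qf) * (X i * X j * X i) + X j * X i * X i"

text \<open>The defining relations of U_q(gl(m|n)) for elements K_j, K_j^{-1} (Ki), E_{i,i+1} (E i),
  F_{i,i+1} (F i) of a C(q)-algebra; super brackets written out with their signs.\<close>
definition Uq_rels :: "nat \<Rightarrow> nat \<Rightarrow> (cq \<Rightarrow> 'a::ring_1) \<Rightarrow> (nat \<Rightarrow> 'a) \<Rightarrow> (nat \<Rightarrow> 'a)
    \<Rightarrow> (nat \<Rightarrow> 'a) \<Rightarrow> (nat \<Rightarrow> 'a) \<Rightarrow> bool" where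
  "Uq_rels m n \<phi> K Ki E F \<longleftrightarrow>
     (\<forall>i\<in>{1..m+n}. \<forall>j\<in>{1..m+n}. K i * K j = K j * K i)
   \<and> (\<forall>i\<in>{1..m+n}. K i * Ki i = 1 \<and> Ki i * K i = 1)
   \<and> (\<forall>i\<in>{1..m+n}. \<forall>j\<in>{1..<m+n}.
        K i * E j * Ki i = \<phi> (kexp m i j) * E j
      \<and> K i * F j * Ki i = \<phi> (inverse (kexp m i j)) * F j)
   \<and> (\<forall>i\<in>{1..<m+n}. \<forall>j\<in>{1..<m+n}.
        E i * F j - (if i = m \<and> j = m then -1 else 1) * (F j * E i)
        = (if i = j then \<phi> (inverse (qidx m i - inverse (qidx m i)))
                         * (K i * Ki (Suc i) - Ki i * K (Suc i)) else 0))
   \<and> E m * E m = 0 \<and> F m * F m = 0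
   \<and> (\<forall>i\<in>{1..<m+n}. \<forall>j\<in>{1..<m+n}. (Suc i < j \<or> Suc j < i) \<longrightarrow>
        E i * E j = E j * E i \<and> F i * F j = F j * F i)
   \<and> (\<forall>i\<in>{1..<m+n}. \<forall>j\<in>{1..<m+n}. (j = Suc i \<or> i = Suc j) \<and> i \<noteq> m \<longrightarrow>
        serre \<phi> E i j = 0 \<and> serre \<phi> F i j = 0)
   \<and> (2 \<le> m \<and> 2 \<le> n \<longrightarrow>
        Eij \<phi> m E (m - 1) (m + 2) * E m + E m * Eij \<phi> m E (m - 1) (m + 2) = 0
      \<and> Fij \<phi> m F (m - 1) (m + 2) * F m + F m * Fij \<phi> m F (m - 1) (m + 2) = 0)"

definition I1 :: "nat \<Rightarrow> nat \<Rightarrow> (nat \<times> nat) set" where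
  "I1 m n = {(i, j). 1 \<le> i \<and> i \<le> m \<and> m < j \<and> j \<le> m + n}"

definition prec :: "nat \<times> nat \<Rightarrow> nat \<times> nat \<Rightarrow> bool" where
  "prec p r \<longleftrightarrow> snd p > snd r \<or> (snd p = snd r \<and> fst p < fst r)"

definition preceq :: "nat \<times> nat \<Rightarrow> nat \<times> nat \<Rightarrow> bool" where
  "preceq p r \<longleftrightarrow> p = r \<or> prec p r"

definition I1_list :: "nat \<Rightarrow> nat \<Rightarrow> (nat \<times> nat) list" where
  "I1_list m n = concat (map (\<lambda>j. map (\<lambda>i. (i, j)) [1..<Suc m]) (rev [Suc m..<Suc (m + n)]))"

definition FI :: "nat \<Rightarrow> nat \<Rightarrow> (cq \<Rightarrow> 'a::ring_1) \<Rightarrow> (nat \<Rightarrow> 'a) \<Rightarrow> (nat \<times> nat) set \<Rightarrow> 'a" where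
  "FI m n \<phi> F I = prod_list (map (\<lambda>(i, j). Fij \<phi> m F i j) (filter (\<lambda>p. p \<in> I) (I1_list m n)))"

definition Fge :: "nat \<Rightarrow> nat \<Rightarrow> (cq \<Rightarrow> 'a::ring_1) \<Rightarrow> (nat \<Rightarrow> 'a) \<Rightarrow> nat \<times> nat \<Rightarrow> 'a" where
  "Fge m n \<phi> F p = FI m n \<phi> F {r \<in> I1 m n. preceq p r}"

definition Fgt :: "nat \<Rightarrow> nat \<Rightarrow> (cq \<Rightarrow> 'a::ring_1) \<Rightarrow> (nat \<Rightarrow> 'a) \<Rightarrow> nat \<times> nat \<Rightarrow> 'a" where
  "Fgt m n \<phi> F p = FI m n \<phi> F {r \<in> I1 m n. prec p r}"

end

theory Submission
  imports Defs
begin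

(* Only the relations among the generators F_a = F_{a,a+1} are used: far
   commutativity, F_m^2 = 0, the q-Serre relations at even vertices and the quartic relation
   [F_{m-1,m+2}, F_{m,m+1}] = 0.  All computations happen in a ring carrying a central image of
   C(q), packaged as the locale negative_part.
   1. Commutation of a generator F_a with a root vector F_{ij}: they commute if a is far from
      [i,j]; if i < a and a+1 < j they commute for a <> m and anticommute for a = m.  The second
      fact reduces to root vectors of length three, where it is a Serre or the quartic relation.
   2. Odd root vectors square to zero: F_{st}^2 = 0 for (s,t) in I_1 (from F_m^2 = 0 and Serre).
   3. Exchange relations: for (i,k) < (s,t) in I_1 we have
        F_{st} F_{ik} = c F_{ik} F_{st} + Z F_{uv}   with (i,k) < (u,v) in I_1.
   4. An abstract ring lemma: in a product ordered by an asymmetric relation whose factors satisfy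
      2 and 3, every factor annihilates the product from the left.
   F_{>=(i,k)} and F_{>(i,k)} are such ordered products over upper sets of (I_1, <), which gives
   the theorem. *)

section \<open>An abstract annihilation lemma for ordered products\<close>

lemma ordered_product_annihilated:
  fixes f :: "'b \<Rightarrow> 'a::ring_1" and R :: "'b \<Rightarrow> 'b \<Rightarrow> bool"
  assumes "sorted_wrt R ys"
    and asym: "\<And>a b. R a b \<Longrightarrow> \<not> R b a"
    and "\<And>r. r \<in> set ys \<Longrightarrow> f r * f r = 0"
    and "\<And>p r. p \<in> set ys \<Longrightarrow> r \<in> set ys \<Longrightarrow> R p r \<Longrightarrow>
           \<exists>c Z u. f r * f p = c * (f p * f r) + Z * f u \<and> u \<in> set ys \<and> R p u"
    and "r \<in> set ys"
  shows "f r * prod_list (map f ys) = 0"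
  using assms(1,3-5)
proof (induction ys arbitrary: r)
  case Nil
  then show ?case by simp
next
  case (Cons p ys)
  let ?P = "prod_list (map f ys)"
  have after_p: "\<And>y. y \<in> set ys \<Longrightarrow> R p y" using Cons.prems(1) by simp
  have not_p: "u \<noteq> p" if "R p' u" "p' \<in> set ys" for p' u
    using that after_p asym by blast
  have IH: "f x * ?P = 0" if "x \<in> set ys" for x
  proof (rule Cons.IH)
    show "sorted_wrt R ys" using Cons.prems(1) by simp
    show "\<exists>c Z u. f r * f p' = c * (f p' * f r) + Z * f u \<and> u \<in> set ys \<and> R p' u"
      if h: "p' \<in> set ys" "r \<in> set ys" "R p' r" for p' r
    proof -
      obtain c Z u where "f r * f p' = c * (f p' * f r) + Z * f u" "u \<in> set (p # ys)" "R p' u"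
        using Cons.prems(3)[of p' r] h by auto
      moreover have "u \<noteq> p" using not_p h(1) \<open>R p' u\<close> by blast
      ultimately show ?thesis by auto
    qed
  qed (use that Cons.prems(2) in auto)
  show ?case
  proof (cases "r = p")
    case True
    have "f p * f p = 0" using Cons.prems(2) by simp
    then show ?thesis using True by (simp flip: mult.assoc)
  next
    case False
    then have r: "r \<in> set ys" using Cons.prems(4) by simp
    obtain c Z u where exch: "f r * f p = c * (f p * f r) + Z * f u"
      and u: "u \<in> set (p # ys)" "R p u"
      using Cons.prems(3)[of p r] r after_p by auto
    have "u \<in> set ys" using u asym by auto
    have "f r * (f p * ?P) = (f r * f p) * ?P" by (simp add: mult.assoc)
    also have "\<dots> = c * f p * (f r * ?P) + Z * (f u * ?P)"
      unfolding exch by (simp add: algebra_simps)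
    also have "\<dots> = 0" using IH r \<open>u \<in> set ys\<close> by simp
    finally show ?thesis by simp
  qed
qed

lemma prec_trans: "prec a b \<Longrightarrow> prec b c \<Longrightarrow> prec a c"
  unfolding prec_def by auto

lemma I1_list_set: "set (I1_list m n) = I1 m n"
  unfolding I1_list_def I1_def by (auto simp: image_iff)

lemma I1_list_sorted: "sorted_wrt prec (I1_list m n)"
proof -
  have "sorted_wrt prec (concat (map (\<lambda>j. map (\<lambda>i. (i, j)) [1..<Suc m]) js))"
    if "sorted_wrt (>) js" for js
    using that
  proof (induction js)
    case Nil
    then show ?case by simp
  next
    case (Cons j js)
    have "sorted_wrt prec (map (\<lambda>i. (i, j)) [1..<Suc m])"
      by (simp add: sorted_wrt_map prec_def del: upt_Suc)
    moreover have "prec x y" if "x \<in> set (map (\<lambda>i. (i, j)) [1..<Suc m])"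
      "y \<in> set (concat (map (\<lambda>j. map (\<lambda>i. (i, j)) [1..<Suc m]) js))" for x y
      using that Cons.prems by (auto simp: prec_def)
    ultimately show ?case using Cons by (simp add: sorted_wrt_append del: upt_Suc)
  qed
  then show ?thesis unfolding I1_list_def by (simp add: sorted_wrt_rev del: upt_Suc)
qed

lemma qf_nonzero: "qf \<noteq> 0"
  unfolding qf_def Zero_fract_def by (simp add: eq_fract)

(* q + q^{-1} is invertible; this is what lets the Serre relations be solved for a product. *)
lemma q_plus_q_inverse_nonzero: "qf + inverse qf \<noteq> 0"
proof
  assume "qf + inverse qf = 0"
  then have "qf * qf + 1 = 0" using qf_nonzero by (simp add: field_simps)
  then have "Fract ([:0,1:] * [:0,1:] + 1) 1 = Fract 0 (1::complex poly)"
    unfolding qf_def Zero_fract_def One_fract_def by simp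
  then have "[:0,1:] * [:0,1:] + 1 = (0 :: complex poly)" by (simp add: eq_fract)
  then have "coeff ([:0,1:] * [:0,1:] + 1) 2 = coeff (0 :: complex poly) 2" by simp
  then show False by (simp add: coeff_mult numeral_2_eq_2)
qed

lemma q_inverse_cancel:
  "qf * (inverse qf * z) = z" "inverse qf * (qf * z) = z"
  "qf * inverse qf = 1" "inverse qf * qf = 1"
  using qf_nonzero by (simp_all flip: mult.assoc)

lemma qidx_cases: "qidx m k = qf \<or> qidx m k = inverse qf"
  unfolding qidx_def by simp

lemma qidx_le: "k \<le> m \<Longrightarrow> qidx m k = qf"
  unfolding qidx_def by simp

lemma qidx_gt: "m < k \<Longrightarrow> qidx m k = inverse qf"
  unfolding qidx_def by simp

lemma root_induct[consumes 1, case_names base step]: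
  assumes "i < j" and "\<And>i. P i (Suc i)" and "\<And>i j. Suc i < j \<Longrightarrow> P (Suc i) j \<Longrightarrow> P i j"
  shows "P i j"
proof -
  have "P i (i + Suc d)" for d i
  proof (induction d arbitrary: i)
    case 0
    then show ?case using assms(2) by simp
  next
    case (Suc d)
    have "P (Suc i) (Suc i + Suc d)" by (rule Suc.IH)
    then show ?case using assms(3)[of i "i + Suc (Suc d)"] by simp
  qed
  moreover have "j = i + Suc (j - i - 1)" using assms(1) by simp
  ultimately show ?thesis by metis
qed

(* Lets a relation a*b = c be applied inside a longer product. *)
lemma assoc_rule: fixes a b c y :: "'a::semigroup_mult" assumes "a * b = c" shows "a * (b * y) = c * y"
  by (simp add: assms[symmetric] mult.assoc)

locale negative_part =
  fixes \<phi> :: "cq \<Rightarrow> 'a::ring_1" and m n :: nat and F :: "nat \<Rightarrow> 'a"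
  assumes hom: "central_hom \<phi>"
    and m_pos: "1 \<le> m"
    and F_far_commute: "\<And>i j. 1 \<le> i \<Longrightarrow> i < m+n \<Longrightarrow> 1 \<le> j \<Longrightarrow> j < m+n \<Longrightarrow> Suc i < j \<Longrightarrow>
                          F i * F j = F j * F i"
    and F_odd_square: "F m * F m = 0"
    and F_serre: "\<And>i j. 1 \<le> i \<Longrightarrow> i < m+n \<Longrightarrow> 1 \<le> j \<Longrightarrow> j < m+n \<Longrightarrow>
                          j = Suc i \<or> i = Suc j \<Longrightarrow> i \<noteq> m \<Longrightarrow> serre \<phi> F i j = 0"
    and F_quartic: "2 \<le> m \<Longrightarrow> 2 \<le> n \<Longrightarrow>
                    Fij \<phi> m F (m-1) (m+2) * F m + F m * Fij \<phi> m F (m-1) (m+2) = 0"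

lemma Uq_rels_negative_part:
  assumes "central_hom \<phi>" "1 \<le> m" "Uq_rels m n \<phi> K Ki E F"
  shows "negative_part \<phi> m n F"
  using assms unfolding negative_part_def Uq_rels_def by auto

context negative_part
begin

lemma phi_add: "\<phi> (a + b) = \<phi> a + \<phi> b" using hom unfolding central_hom_def by blast
lemma phi_mult: "\<phi> (a * b) = \<phi> a * \<phi> b" using hom unfolding central_hom_def by blast
lemma phi_one: "\<phi> 1 = 1" using hom unfolding central_hom_def by blast
lemma phi_central: "\<phi> c * x = x * \<phi> c" using hom unfolding central_hom_def by blast
lemma phi_minus: "\<phi> (- a) = - \<phi> a" using phi_add[of a "-a"] phi_add[of 0 0] by (simp add: eq_neg_iff_add_eq_0 add.commute)
lemma phi_diff: "\<phi> (a - b) = \<phi> a - \<phi> b" using phi_add[of a "-b"] phi_minus by simp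

definition sm :: "cq \<Rightarrow> 'a \<Rightarrow> 'a" where "sm c x = \<phi> c * x"

lemma sm_simps:
  "x * sm c y = sm c (x * y)" "sm c x * y = sm c (x * y)" "sm c (sm d x) = sm (c * d) x"
  "sm c (x + y) = sm c x + sm c y" "sm c (x - y) = sm c x - sm c y" "sm c (- x) = - sm c x"
  "sm (c + d) x = sm c x + sm d x" "sm (c - d) x = sm c x - sm d x"
  "sm 1 x = x" "sm c 0 = 0" "sm (- c) x = - sm c x"
  unfolding sm_def
  by (simp_all add: mult.assoc phi_mult phi_add phi_diff phi_one phi_minus algebra_simps)
     (metis mult.assoc phi_central)

(* Normal form for identities between noncommutative polynomials with C(q)-coefficients. *)
lemmas nf = algebra_simps sm_simps q_inverse_cancel mult_ac

lemma sm_cancel: assumes "c \<noteq> 0" "sm c x = 0" shows "x = 0"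
proof -
  have "sm (inverse c * c) x = 0" using assms(2) by (simp flip: sm_simps(3) add: sm_simps)
  then show "x = 0" using assms(1) by (simp add: sm_simps)
qed

abbreviation X where "X i j \<equiv> Fij \<phi> m F i j"

lemma X_simple: "X i (Suc i) = F i"
  unfolding Fij_def by simp

lemma X_left: "Suc i < j \<Longrightarrow> X i j = X (Suc i) j * F i - sm (qidx m (Suc i)) (F i * X (Suc i) j)"
proof -
  assume "Suc i < j"
  then have "j - i - 1 = Suc (j - Suc i - 1)" by simp
  then show ?thesis unfolding Fij_def sm_def by (simp add: algebra_simps mult.assoc)
qed

lemma F_commute: "1 \<le> a \<Longrightarrow> a < m+n \<Longrightarrow> 1 \<le> b \<Longrightarrow> b < m+n \<Longrightarrow> Suc a < b \<or> Suc b < a \<Longrightarrow>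
    F a * F b = F b * F a"
  using F_far_commute by metis

section \<open>Commutation of generators with root vectors\<close>

lemma F_X_far_commute:
  "i < j \<Longrightarrow> 1 \<le> i \<Longrightarrow> j \<le> m+n \<Longrightarrow> 1 \<le> a \<Longrightarrow> a < m+n \<Longrightarrow> Suc a < i \<or> j < a \<Longrightarrow>
    F a * X i j = X i j * F a"
proof (induction i j rule: root_induct)
  case (base i)
  then show ?case by (auto simp: X_simple intro!: F_commute)
next
  case (step i j)
  have c1: "F a * F i = F i * F a" using step by (intro F_commute) auto
  have c2: "F a * X (Suc i) j = X (Suc i) j * F a" using step by auto
  show ?case unfolding X_left[OF step(1)]
    using c1 c2 assoc_rule[OF c1] assoc_rule[OF c2] by (simp add: nf)
qed

lemma X_commute:
  "i < j \<Longrightarrow> (\<And>a. i \<le> a \<Longrightarrow> a < j \<Longrightarrow> F a * Y = Y * F a) \<Longrightarrow> X i j * Y = Y * X i j"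
proof (induction i j rule: root_induct)
  case (base i)
  then show ?case by (simp add: X_simple)
next
  case (step i j)
  have c1: "F i * Y = Y * F i" using step by auto
  have c2: "X (Suc i) j * Y = Y * X (Suc i) j" using step by auto
  show ?case unfolding X_left[OF step(1)]
    using c1 c2 assoc_rule[OF c1] assoc_rule[OF c2] by (simp add: nf)
qed

lemma X_anticommute:
  "i < j \<Longrightarrow> i \<le> m \<Longrightarrow> m < j \<Longrightarrow> (\<And>a. i \<le> a \<Longrightarrow> a < j \<Longrightarrow> a \<noteq> m \<Longrightarrow> F a * Y = Y * F a)
   \<Longrightarrow> F m * Y = - (Y * F m) \<Longrightarrow> X i j * Y = - (Y * X i j)"
proof (induction i j rule: root_induct)
  case (base i)
  then have "i = m" by simp
  with base show ?case by (simp add: X_simple)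
next
  case (step i j)
  show ?case
  proof (cases "i = m")
    case True
    have c1: "F i * Y = - (Y * F i)" using step True by auto
    have c2: "X (Suc i) j * Y = Y * X (Suc i) j" using step True by (intro X_commute) auto
    show ?thesis unfolding X_left[OF step(1)]
      using c1 c2 assoc_rule[OF c1] assoc_rule[OF c2] by (simp add: nf)
  next
    case False
    have c1: "F i * Y = Y * F i" using step False by auto
    have c2: "X (Suc i) j * Y = - (Y * X (Suc i) j)" using step False by auto
    show ?thesis unfolding X_left[OF step(1)]
      using c1 c2 assoc_rule[OF c1] assoc_rule[OF c2] by (simp add: nf)
  qed
qed

lemma X_disjoint_commute:
  "1 \<le> i \<Longrightarrow> i < j \<Longrightarrow> j < k \<Longrightarrow> k < l \<Longrightarrow> l \<le> m+n \<Longrightarrow> X i j * X k l = X k l * X i j"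
  by (rule X_commute) (auto intro!: F_X_far_commute)

lemma X_split:
  "1 \<le> i \<Longrightarrow> i < c \<Longrightarrow> c < j \<Longrightarrow> j \<le> m+n \<Longrightarrow> X i j = X c j * X i c - sm (qidx m c) (X i c * X c j)"
proof (induction c arbitrary: j)
  case 0
  then show ?case by simp
next
  case (Suc c)
  show ?case
  proof (cases "c = i")
    case True
    then show ?thesis using Suc X_left[of i j] by (simp add: X_simple)
  next
    case False
    then have ic: "i < c" using Suc by simp
    have e1: "X i j = X c j * X i c - sm (qidx m c) (X i c * X c j)" using Suc ic by simp
    have e2: "X c j = X (Suc c) j * F c - sm (qidx m (Suc c)) (F c * X (Suc c) j)"
      using Suc by (intro X_left) simp
    have "X i (Suc c) = X c (Suc c) * X i c - sm (qidx m c) (X i c * X c (Suc c))"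
      by (rule Suc.IH) (use Suc.prems ic in auto)
    then have e3: "X i (Suc c) = F c * X i c - sm (qidx m c) (X i c * F c)"
      by (simp add: X_simple)
    have cm: "X (Suc c) j * X i c = X i c * X (Suc c) j"
      using Suc ic by (intro X_disjoint_commute[symmetric]) auto
    show ?thesis unfolding e1 e2 e3 using cm assoc_rule[OF cm] by (simp add: nf)
  qed
qed

lemma X_right: "1 \<le> i \<Longrightarrow> i < j \<Longrightarrow> j < m+n \<Longrightarrow>
    X i (Suc j) = F j * X i j - sm (qidx m j) (X i j * F j)"
  using X_split[of i j "Suc j"] by (simp add: X_simple)

section \<open>Consequences of the Serre relations\<close>

definition serre_op :: "'a \<Rightarrow> 'a \<Rightarrow> 'a" where
  "serre_op v y = v * v * y - sm (qf + inverse qf) (v * y * v) + y * v * v"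

lemma serre_F: "serre \<phi> F i j = serre_op (F i) (F j)"
  unfolding serre_def serre_op_def sm_def by simp

lemma serre_op_commutator_left:
  "v * A = A * v \<Longrightarrow> serre_op v (A * f - sm x (f * A)) = A * serre_op v f - sm x (serre_op v f * A)"
  unfolding serre_op_def using assoc_rule[of v A] by (simp add: nf)

lemma serre_op_commutator_right:
  "v * A = A * v \<Longrightarrow> serre_op v (f * A - sm x (A * f)) = serre_op v f * A - sm x (A * serre_op v f)"
  unfolding serre_op_def using assoc_rule[of v A] by (simp add: nf)

lemma serre_F_X_left:
  assumes "a \<noteq> m" "1 \<le> a" "Suc a < j" "j \<le> m+n"
  shows "serre_op (F a) (X (Suc a) j) = 0"
proof -
  have s0: "serre_op (F a) (F (Suc a)) = 0" using F_serre[of a "Suc a"] assms by (simp add: serre_F)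
  show ?thesis
  proof (cases "j = Suc (Suc a)")
    case True
    then show ?thesis using s0 by (simp add: X_simple)
  next
    case False
    have "F a * X (Suc (Suc a)) j = X (Suc (Suc a)) j * F a"
      using assms False by (intro F_X_far_commute) auto
    then show ?thesis using assms False
      by (simp add: X_left[of "Suc a" j] serre_op_commutator_left X_simple s0 sm_simps)
  qed
qed

lemma serre_F_X_right:
  assumes "b \<noteq> m" "1 \<le> i" "i < b" "b < m+n"
  shows "serre_op (F b) (X i b) = 0"
proof (cases "b = Suc i")
  case True
  then show ?thesis using F_serre[of b i] assms by (simp add: X_simple serre_F)
next
  case False
  then obtain c where c: "b = Suc c" "i < c" using assms by (cases b) auto
  have s0: "serre_op (F b) (F c) = 0" using F_serre[of b c] assms c by (simp add: serre_F)
  have "F b * X i c = X i c * F b" using assms c by (intro F_X_far_commute) auto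
  moreover have "X i b = F c * X i c - sm (qidx m c) (X i c * F c)"
    using X_right[of i c] assms c by simp
  ultimately show ?thesis by (simp add: serre_op_commutator_right s0 sm_simps)
qed

(* If B^2 = 0 and g satisfies the Serre relation with B, the q-commutator of B and g again
   squares to zero.  This propagates F_m^2 = 0 to all odd root vectors. *)
lemma commutator_square_zero:
  assumes "B * B = 0" "serre_op g B = 0"
  shows "(B*g - sm qf (g*B)) * (B*g - sm qf (g*B)) = 0"
proof -
  let ?c = "qf + inverse qf"
  have "serre_op g B * B = 0" "B * serre_op g B = 0" using assms by simp_all
  then have e1: "B*(g*(g*B)) = sm ?c (g*(B*(g*B)))" and e2: "B*(g*(g*B)) = sm ?c (B*(g*(B*g)))"
    unfolding serre_op_def using assms(1) assoc_rule[OF assms(1)] by (simp_all add: nf)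
  have "sm ?c (g*(B*(g*B)) - B*(g*(B*g))) = 0" using e1 e2 by (simp add: sm_simps)
  then have e3: "B*(g*(B*g)) = g*(B*(g*B))"
    using sm_cancel q_plus_q_inverse_nonzero by force
  show ?thesis using e1 e3 assms(1) assoc_rule[OF assms(1)] by (simp add: nf)
qed

lemma commutator_square_zero':
  assumes "B * B = 0" "serre_op h B = 0"
  shows "(h*B - sm (inverse qf) (B*h)) * (h*B - sm (inverse qf) (B*h)) = 0"
proof -
  have "(h*B - sm (inverse qf) (B*h)) * (h*B - sm (inverse qf) (B*h))
      = sm (inverse qf * inverse qf) ((B*h - sm qf (h*B)) * (B*h - sm qf (h*B)))"
    by (simp add: nf)
  then show ?thesis using commutator_square_zero[OF assms] by (simp add: sm_simps)
qed

section \<open>Odd root vectors square to zero\<close>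

lemma X_square_zero_row_m: "m < t \<Longrightarrow> t \<le> m+n \<Longrightarrow> X m t * X m t = 0"
proof (induction t)
  case 0
  then show ?case by simp
next
  case (Suc t)
  show ?case
  proof (cases "t = m")
    case True
    then show ?thesis by (simp add: X_simple F_odd_square)
  next
    case False
    then have t: "m < t" "t < m+n" using Suc by auto
    have "X m (Suc t) = F t * X m t - sm (inverse qf) (X m t * F t)"
      using X_right[of m t] t m_pos by (simp add: qidx_gt)
    moreover have "serre_op (F t) (X m t) = 0" using serre_F_X_right[of t m] t m_pos False by simp
    ultimately show ?thesis using commutator_square_zero' Suc t by simp
  qed
qed

lemma X_square_zero:
  assumes "(s, t) \<in> I1 m n"
  shows "X s t * X s t = 0"
proof -
  have st: "1 \<le> s" "s \<le> m" "m < t" "t \<le> m+n" using assms unfolding I1_def by auto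
  from st(2,1) show ?thesis
  proof (induction s rule: inc_induct)
    case base
    then show ?case using X_square_zero_row_m st by simp
  next
    case (step k)
    have "X k t = X (Suc k) t * F k - sm qf (F k * X (Suc k) t)"
      using X_left[of k t] step st by (simp add: qidx_le)
    moreover have "serre_op (F k) (X (Suc k) t) = 0" using serre_F_X_left[of k t] step st by simp
    ultimately show ?case using commutator_square_zero step by simp
  qed
qed

section \<open>Exchange relations between odd root vectors\<close>

lemma X_same_column:
  assumes "1 \<le> i" "i < s" "s \<le> m" "m < k" "k \<le> m+n"
  shows "X s k * X i k = - sm qf (X i k * X s k)"
proof -
  have sq: "X s k * X s k = 0" using X_square_zero assms unfolding I1_def by simp
  have "i \<le> s - 1" using assms by simp
  then show ?thesis using assms(1)
  proof (induction i rule: inc_induct)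
    case base
    have e: "X (s-1) k = X s k * F (s-1) - sm qf (F (s-1) * X s k)"
      using X_left[of "s-1" k] assms by (simp add: qidx_le)
    show ?case unfolding e using sq assoc_rule[OF sq] by (simp add: nf)
  next
    case (step j)
    have e: "X j k = X (Suc j) k * F j - sm qf (F j * X (Suc j) k)"
      using X_left[of j k] step assms by (simp add: qidx_le)
    have c: "X s k * F j = F j * X s k" using step assms by (intro F_X_far_commute[symmetric]) auto
    have ih: "X s k * X (Suc j) k = - sm qf (X (Suc j) k * X s k)" using step by simp
    show ?case unfolding e using c assoc_rule[OF c] ih assoc_rule[OF ih] by (simp add: nf)
  qed
qed

lemma X_same_row:
  assumes "1 \<le> s" "s \<le> m" "m < t" "t < k" "k \<le> m+n"
  shows "X s t * X s k = - sm qf (X s k * X s t)"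
proof -
  have sq: "X s t * X s t = 0" using X_square_zero assms unfolding I1_def by simp
  have "Suc t \<le> k" using assms by simp
  then show ?thesis using assms(5)
  proof (induction k rule: dec_induct)
    case base
    have e: "X s (Suc t) = F t * X s t - sm (inverse qf) (X s t * F t)"
      using X_right[of s t] assms by (simp add: qidx_gt)
    show ?case unfolding e using sq assoc_rule[OF sq] by (simp add: nf)
  next
    case (step j)
    have e: "X s (Suc j) = F j * X s j - sm (inverse qf) (X s j * F j)"
      using X_right[of s j] assms step by (simp add: qidx_gt)
    have c: "X s t * F j = F j * X s t" using step assms by (intro F_X_far_commute[symmetric]) auto
    have ih: "X s t * X s j = - sm qf (X s j * X s t)" using step by simp
    show ?case unfolding e using c assoc_rule[OF c] ih assoc_rule[OF ih] by (simp add: nf)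
  qed
qed

(* The sign with which F_a passes an interior root vector: -1 for the odd generator. *)
definition parity_sign :: "nat \<Rightarrow> cq" where
  "parity_sign a = (if a = m then -1 else 1)"

(* Key identity behind the length-three case: if u and w commute and both satisfy the Serre
   relation with v, then v commutes with the iterated q-commutator of w, v, u. *)
lemma serre_iterated_commutator:
  assumes "u*w = w*u" "serre_op v u = 0" "serre_op v w = 0" "r = qf \<or> r = inverse qf"
  defines "Z \<equiv> (w*v - sm r (v*w))*u - sm r (u*(w*v - sm r (v*w)))"
  shows "v * Z = Z * v"
proof -
  have "sm (qf + inverse qf) (v*Z - Z*v)
      = sm (qf + inverse qf) (- sm r (serre_op v w * u) + sm r (w * serre_op v u))
        + sm (r*r) (serre_op v w * u - w * serre_op v u - serre_op v u * w + u * serre_op v w)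
        + sm (r*r) (v*v*(u*w - w*u) + (w*u - u*w)*v*v)
        + sm (1 + r*r) ((u*w - w*u)*v*v + v*(w*u - u*w)*v)"
    using assms(4) unfolding Z_def serre_op_def by (auto simp: nf)
  also have "\<dots> = 0" using assms(1-3) by (simp add: sm_simps)
  finally show ?thesis using sm_cancel q_plus_q_inverse_nonzero by force
qed

(* Length three: F_{i+1} passes F_{i,i+3}; for i+1 = m this is the quartic relation. *)
lemma F_X_length_three:
  assumes "1 \<le> i" "i + 3 \<le> m+n"
  shows "F (Suc i) * X i (i+3) = sm (parity_sign (Suc i)) (X i (i+3) * F (Suc i))"
proof (cases "Suc i = m")
  case True
  then have "m - 1 = i" "m + 2 = i + 3" by auto
  then have "X i (i+3) * F (Suc i) + F (Suc i) * X i (i+3) = 0"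
    using F_quartic assms True by auto
  then show ?thesis using True
    by (simp add: parity_sign_def sm_simps eq_neg_iff_add_eq_0 add.commute)
next
  case False
  define r where "r = qidx m (Suc i)"
  have r2: "qidx m (Suc (Suc i)) = r" unfolding r_def qidx_def using False by auto
  have e1: "X (Suc i) (i+3) = F (Suc (Suc i)) * F (Suc i) - sm r (F (Suc i) * F (Suc (Suc i)))"
    using X_left[of "Suc i" "i+3"] r2 by (simp add: X_simple numeral_3_eq_3)
  have e2: "X i (i+3) = X (Suc i) (i+3) * F i - sm r (F i * X (Suc i) (i+3))"
    using X_left[of i "i+3"] r_def by simp
  have "F i * F (Suc (Suc i)) = F (Suc (Suc i)) * F i" using assms by (intro F_commute) auto
  moreover have "serre_op (F (Suc i)) (F i) = 0" "serre_op (F (Suc i)) (F (Suc (Suc i))) = 0"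
    using F_serre[of "Suc i" i] F_serre[of "Suc i" "Suc (Suc i)"] assms False
    by (simp_all add: serre_F)
  moreover have "r = qf \<or> r = inverse qf" unfolding r_def by (rule qidx_cases)
  ultimately show ?thesis unfolding e2 e1 using False
    by (simp add: serre_iterated_commutator parity_sign_def sm_simps)
qed

(* An interior generator F_a, i < a < a+1 < j, commutes with F_{ij} up to its parity sign.
   Both ends are extended from the length-three case one generator at a time. *)
lemma F_X_interior_left:
  assumes "1 \<le> i" "i < a" "a + 2 \<le> m+n"
  shows "F a * X i (a+2) = sm (parity_sign a) (X i (a+2) * F a)"
proof -
  have "i \<le> a - 1" using assms by simp
  then show ?thesis using assms(1)
  proof (induction i rule: inc_induct)
    case base
    have "Suc (a-1) = a" "(a-1)+3 = a+2" using assms by auto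
    then show ?case using F_X_length_three[of "a-1"] assms by simp
  next
    case (step k)
    have e: "X k (a+2) = X (Suc k) (a+2) * F k - sm (qidx m (Suc k)) (F k * X (Suc k) (a+2))"
      using X_left[of k "a+2"] step by simp
    have c: "F a * F k = F k * F a" using step assms by (intro F_commute) auto
    have ih: "F a * X (Suc k) (a+2) = sm (parity_sign a) (X (Suc k) (a+2) * F a)"
      using step by simp
    show ?case unfolding e using c assoc_rule[OF c] ih assoc_rule[OF ih] by (simp add: nf)
  qed
qed

lemma F_X_interior:
  assumes "1 \<le> i" "i < a" "Suc a < j" "j \<le> m+n"
  shows "F a * X i j = sm (parity_sign a) (X i j * F a)"
proof -
  have "a + 2 \<le> j" using assms by simp
  then show ?thesis using assms(4)
  proof (induction j rule: dec_induct)
    case base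
    then show ?case using F_X_interior_left assms by simp
  next
    case (step k)
    have e: "X i (Suc k) = F k * X i k - sm (qidx m k) (X i k * F k)"
      using X_right[of i k] assms step by simp
    have c: "F a * F k = F k * F a" using step assms by (intro F_commute) auto
    have ih: "F a * X i k = sm (parity_sign a) (X i k * F a)" using step by simp
    show ?case unfolding e using c assoc_rule[OF c] ih assoc_rule[OF ih] by (simp add: nf)
  qed
qed

lemma X_nested:
  assumes "1 \<le> i" "i < s" "s \<le> m" "m < t" "t < k" "k \<le> m+n"
  shows "X s t * X i k = - (X i k * X s t)"
proof (rule X_anticommute)
  show "s < t" "s \<le> m" "m < t" using assms by auto
  show "F a * X i k = X i k * F a" if "s \<le> a" "a < t" "a \<noteq> m" for a
    using F_X_interior[of i a k] that assms by (simp add: parity_sign_def sm_simps)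
  show "F m * X i k = - (X i k * F m)"
    using F_X_interior[of i m k] assms by (simp add: parity_sign_def sm_simps)
qed

(* The inductive step for crossing root vectors, isolated as a ring identity. *)
lemma crossing_step:
  assumes "A = B*g - sm qf (g*B)" "C = D*g - sm qf (g*D)"
    and "B*D = - sm qf (D*B)" "B*C = -(C*B)"
  shows "A*D = -(D*A) - sm (qf - inverse qf) (C*B)"
proof -
  have "B*C + sm qf (sm qf (C*B)) = - sm qf (D*A) - sm qf (A*D)"
    unfolding assms(1,2) using assoc_rule[OF assms(3)] assms(3) by (simp add: nf)
  then have h: "sm qf (A*D) = C*B - sm qf (sm qf (C*B)) - sm qf (D*A)"
    using assms(4) by (simp add: algebra_simps)
  have "A*D = sm (inverse qf) (sm qf (A*D))" by (simp add: nf)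
  also have "\<dots> = -(D*A) - sm (qf - inverse qf) (C*B)" unfolding h by (simp add: nf)
  finally show ?thesis .
qed

(* Crossing odd root vectors, s < i and t < k: the exchange produces the correction term
   F_{sk} F_{it}, whose right factor F_{it} comes after F_{ik}. *)
lemma X_crossing:
  assumes "1 \<le> s" "s < i" "i \<le> m" "m < t" "t < k" "k \<le> m+n"
  shows "X s t * X i k = -(X i k * X s t) - sm (qf - inverse qf) (X s k * X i t)"
proof -
  define s0 where "s0 = i - 1"
  have s0: "Suc s0 = i" "1 \<le> s0" using assms unfolding s0_def by auto
  have left: "X s0 t * X i k = -(X i k * X s0 t) - sm (qf - inverse qf) (X s0 k * X i t)"
  proof -
    have "Suc t \<le> k" using assms by simp
    then show ?thesis using assms(6)
    proof (induction k rule: dec_induct)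
      case base
      show ?case
      proof (rule crossing_step)
        show "X s0 t = X i t * F s0 - sm qf (F s0 * X i t)"
          using X_left[of s0 t] s0 assms by (simp add: qidx_le)
        show "X s0 (Suc t) = X i (Suc t) * F s0 - sm qf (F s0 * X i (Suc t))"
          using X_left[of s0 "Suc t"] s0 assms by (simp add: qidx_le)
        show "X i t * X i (Suc t) = - sm qf (X i (Suc t) * X i t)"
          using X_same_row[of i t "Suc t"] s0 assms by simp
        show "X i t * X s0 (Suc t) = - (X s0 (Suc t) * X i t)"
          using X_nested[of s0 i t "Suc t"] s0 assms by simp
      qed
    next
      case (step j)
      have e1: "X i (Suc j) = F j * X i j - sm (inverse qf) (X i j * F j)"
        using X_right[of i j] assms step by (simp add: qidx_gt)
      have e2: "X s0 (Suc j) = F j * X s0 j - sm (inverse qf) (X s0 j * F j)"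
        using X_right[of s0 j] assms step s0 by (simp add: qidx_gt)
      have c1: "X s0 t * F j = F j * X s0 t"
        using step assms s0 by (intro F_X_far_commute[symmetric]) auto
      have c2: "X i t * F j = F j * X i t"
        using step assms s0 by (intro F_X_far_commute[symmetric]) auto
      have ih: "X s0 t * X i j = -(X i j * X s0 t) - sm (qf - inverse qf) (X s0 j * X i t)"
        using step by simp
      show ?case unfolding e1 e2
        by (simp add: nf c1 assoc_rule[OF c1] c2 assoc_rule[OF c2] ih assoc_rule[OF ih])
    qed
  qed
  have "s \<le> s0" using assms s0 by simp
  then show ?thesis using assms(1)
  proof (induction s rule: inc_induct)
    case base
    then show ?case using left by simp
  next
    case (step j)
    have e1: "X j t = X (Suc j) t * F j - sm qf (F j * X (Suc j) t)"
      using X_left[of j t] step s0 assms by (simp add: qidx_le)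
    have e2: "X j k = X (Suc j) k * F j - sm qf (F j * X (Suc j) k)"
      using X_left[of j k] step s0 assms by (simp add: qidx_le)
    have c1: "F j * X i k = X i k * F j" using step assms s0 by (intro F_X_far_commute) auto
    have c2: "F j * X i t = X i t * F j" using step assms s0 by (intro F_X_far_commute) auto
    have ih: "X (Suc j) t * X i k = -(X i k * X (Suc j) t) - sm (qf - inverse qf) (X (Suc j) k * X i t)"
      using step by simp
    show ?case unfolding e1 e2
      by (simp add: nf c1 assoc_rule[OF c1] c2 assoc_rule[OF c2] ih assoc_rule[OF ih])
  qed
qed

lemma exchange:
  assumes "(i,k) \<in> I1 m n" "(s,t) \<in> I1 m n" "prec (i,k) (s,t)"
  shows "\<exists>c Z u v. X s t * X i k = c * (X i k * X s t) + Z * X u v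
                   \<and> (u,v) \<in> I1 m n \<and> prec (i,k) (u,v)"
proof -
  have h: "1 \<le> i" "i \<le> m" "m < k" "k \<le> m+n" "1 \<le> s" "s \<le> m" "m < t" "t \<le> m+n"
    using assms(1,2) unfolding I1_def by auto
  have "t < k \<or> (t = k \<and> i < s)" using assms(3) unfolding prec_def by auto
  then consider "t = k" "i < s" | "t < k" "s = i" | "t < k" "i < s" | "t < k" "s < i"
    by linarith
  then show ?thesis
  proof cases
    case 1
    then have "X s t * X i k = \<phi> (- qf) * (X i k * X s t) + 0 * X s t"
      using X_same_column[of i s k] h by (simp add: sm_def phi_minus)
    then show ?thesis using assms by blast
  next
    case 2
    then have "X s t * X i k = \<phi> (- qf) * (X i k * X s t) + 0 * X s t"
      using X_same_row[of i t k] h by (simp add: sm_def phi_minus)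
    then show ?thesis using assms by blast
  next
    case 3
    then have "X s t * X i k = (- 1) * (X i k * X s t) + 0 * X s t"
      using X_nested[of i s t k] h by simp
    then show ?thesis using assms by blast
  next
    case 4
    then have "X s t * X i k = (- 1) * (X i k * X s t) + (- sm (qf - inverse qf) (X s k)) * X i t"
      using X_crossing[of s i t k] h by (simp add: nf)
    moreover have "(i,t) \<in> I1 m n" "prec (i,k) (i,t)" using h 4 unfolding I1_def prec_def by auto
    ultimately show ?thesis by blast
  qed
qed

lemma upper_set_product_annihilated:
  assumes U_sub: "U \<subseteq> I1 m n"
    and U_upper: "\<And>x y. x \<in> U \<Longrightarrow> y \<in> I1 m n \<Longrightarrow> prec x y \<Longrightarrow> y \<in> U"
    and "(s, t) \<in> U"
  shows "X s t * FI m n \<phi> F U = 0"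
proof -
  let ?ys = "filter (\<lambda>p. p \<in> U) (I1_list m n)"
  have set_ys: "set ?ys = U" using U_sub I1_list_set by auto
  have "(\<lambda>(i, j). X i j) (s, t) * prod_list (map (\<lambda>(i, j). X i j) ?ys) = 0"
  proof (rule ordered_product_annihilated[where R = prec])
    show "sorted_wrt prec ?ys" using I1_list_sorted by (rule sorted_wrt_filter)
    show "\<not> prec b a" if "prec a b" for a b using that unfolding prec_def by auto
    show "(\<lambda>(i, j). X i j) r * (\<lambda>(i, j). X i j) r = 0" if "r \<in> set ?ys" for r
    proof -
      have "r \<in> I1 m n" using that set_ys U_sub by auto
      then show ?thesis using X_square_zero by (cases r) auto
    qed
    show "\<exists>c Z u. (\<lambda>(i, j). X i j) r * (\<lambda>(i, j). X i j) p
            = c * ((\<lambda>(i, j). X i j) p * (\<lambda>(i, j). X i j) r) + Z * (\<lambda>(i, j). X i j) u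
            \<and> u \<in> set ?ys \<and> prec p u"
      if h: "p \<in> set ?ys" "r \<in> set ?ys" "prec p r" for p r
    proof -
      obtain a b c d where pr: "p = (a, b)" "r = (c, d)" by fastforce
      have ab: "(a, b) \<in> U" and cd: "(c, d) \<in> I1 m n" using h set_ys U_sub pr by auto
      obtain e Z u v where exch: "X c d * X a b = e * (X a b * X c d) + Z * X u v"
        and uv: "(u, v) \<in> I1 m n" "prec (a, b) (u, v)"
        using exchange[of a b c d] ab cd U_sub h(3) pr by blast
      have "(u, v) \<in> set ?ys" using U_upper[OF ab uv] set_ys by simp
      then show ?thesis using exch uv pr by auto
    qed
    show "(s, t) \<in> set ?ys" using assms(3) set_ys by simp
  qed
  then show ?thesis unfolding FI_def by simp
qed

end

theorem lemma5p2:
  fixes \<phi> :: "cq \<Rightarrow> 'a::ring_1" and K Ki E F :: "nat \<Rightarrow> 'a" and m n i k :: nat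
  assumes "1 \<le> m" and "1 \<le> n"
    and "central_hom \<phi>"
    and "Uq_rels m n \<phi> K Ki E F"
    and "(i, k) \<in> I1 m n"
  shows "(\<forall>(s, t)\<in>I1 m n. preceq (i, k) (s, t) \<longrightarrow> Fij \<phi> m F s t * Fge m n \<phi> F (i, k) = 0)
       \<and> (\<forall>(s, t)\<in>I1 m n. prec (i, k) (s, t) \<longrightarrow> Fij \<phi> m F s t * Fgt m n \<phi> F (i, k) = 0)"
proof -
  interpret negative_part \<phi> m n F
    using assms(3,1,4) by (rule Uq_rels_negative_part)
  have "Fij \<phi> m F s t * Fge m n \<phi> F (i, k) = 0"
    if "(s, t) \<in> I1 m n" "preceq (i, k) (s, t)" for s t
    unfolding Fge_def using that
    by (intro upper_set_product_annihilated) (auto simp: preceq_def dest: prec_trans)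
  moreover have "Fij \<phi> m F s t * Fgt m n \<phi> F (i, k) = 0"
    if "(s, t) \<in> I1 m n" "prec (i, k) (s, t)" for s t
    unfolding Fgt_def using that
    by (intro upper_set_product_annihilated) (auto dest: prec_trans)
  ultimately show ?thesis by blast
qed

end
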